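(* For every $d\ge 1$, the set $X=(L_0\cup L_d)\setminus\{[0,11\cdots1],[d,11\cdots1]\}$ is a mutual-visibility set of $\mathit{BF}(d)$. In particular $\mu(\mathit{BF}(d))\ge 2^{d+1}-2$.
   Context: Binary strings $c=c_0\cdots c_{d-1}$ have positions $0,\dots,d-1$ from the left; $c(i)$ is $c$ with bit $i$ complemented. $\mathit{BF}(d)$ has vertex set $\{[\ell,c]:\ell\in\{0,\dots,d\},\ c\in\{0,1\}^d\}$; for $\ell\in\{0,\dots,d-1\}$, $[\ell,c]$ is adjacent to $[\ell+1,c']$ iff $c'=c$ or $c'=c(\ell)$, and there are no other edges. $L_j=\{[j,c]:c\in\{0,1\}^d\}$ is level $j$. For a connected graph $G$ and $X\subseteq V(G)$, two vertices $x,y$ are $X$-visible if some shortest $x,y$-path has no internal vertex in $X$; $X$ is a mutual-visibility set if every two vertices of $X$ are $X$-visible; $\mu(G)$ is the maximum size of a mutual-visibility set. *)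

theory Defs
  imports Main
begin

definition walk :: "'a set \<Rightarrow> ('a \<Rightarrow> 'a \<Rightarrow> bool) \<Rightarrow> 'a list \<Rightarrow> bool" where
  "walk V E p \<longleftrightarrow> p \<noteq> [] \<and> set p \<subseteq> V \<and> (\<forall>i. Suc i < length p \<longrightarrow> E (p ! i) (p ! Suc i))"

definition walk_betw :: "'a set \<Rightarrow> ('a \<Rightarrow> 'a \<Rightarrow> bool) \<Rightarrow> 'a \<Rightarrow> 'a list \<Rightarrow> 'a \<Rightarrow> bool" where
  "walk_betw V E x p y \<longleftrightarrow> walk V E p \<and> hd p = x \<and> last p = y"

definition gdist :: "'a set \<Rightarrow> ('a \<Rightarrow> 'a \<Rightarrow> bool) \<Rightarrow> 'a \<Rightarrow> 'a \<Rightarrow> nat" where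
  "gdist V E x y = (LEAST n. \<exists>p. walk_betw V E x p y \<and> length p - 1 = n)"

definition shortest_path :: "'a set \<Rightarrow> ('a \<Rightarrow> 'a \<Rightarrow> bool) \<Rightarrow> 'a \<Rightarrow> 'a list \<Rightarrow> 'a \<Rightarrow> bool" where
  "shortest_path V E x p y \<longleftrightarrow> walk_betw V E x p y \<and> length p - 1 = gdist V E x y"

definition internal :: "'a list \<Rightarrow> 'a set" where
  "internal p = set (butlast (tl p))"

definition X_visible :: "'a set \<Rightarrow> ('a \<Rightarrow> 'a \<Rightarrow> bool) \<Rightarrow> 'a set \<Rightarrow> 'a \<Rightarrow> 'a \<Rightarrow> bool" where
  "X_visible V E X x y \<longleftrightarrow> (\<exists>p. shortest_path V E x p y \<and> internal p \<inter> X = {})"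

definition mutual_visibility_set :: "'a set \<Rightarrow> ('a \<Rightarrow> 'a \<Rightarrow> bool) \<Rightarrow> 'a set \<Rightarrow> bool" where
  "mutual_visibility_set V E X \<longleftrightarrow> X \<subseteq> V \<and> (\<forall>x\<in>X. \<forall>y\<in>X. X_visible V E X x y)"

text \<open>Mutual-visibility number (for finite graphs).\<close>
definition mu :: "'a set \<Rightarrow> ('a \<Rightarrow> 'a \<Rightarrow> bool) \<Rightarrow> nat" where
  "mu V E = Max {card X | X. mutual_visibility_set V E X}"

text \<open>Vertex [l,c] is the pair (l, c) with c a bool list of length d (True = bit 1);
  position i of c is c ! i.\<close>

definition flip :: "bool list \<Rightarrow> nat \<Rightarrow> bool list" where
  "flip c i = c[i := \<not> c ! i]"

definition BF_V :: "nat \<Rightarrow> (nat \<times> bool list) set" where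
  "BF_V d = {(l, c). l \<le> d \<and> length c = d}"

definition BF_up :: "nat \<Rightarrow> nat \<times> bool list \<Rightarrow> nat \<times> bool list \<Rightarrow> bool" where
  "BF_up d u v \<longleftrightarrow> u \<in> BF_V d \<and> v \<in> BF_V d \<and> fst u < d \<and> fst v = fst u + 1
      \<and> (snd v = snd u \<or> snd v = flip (snd u) (fst u))"

definition BF_E :: "nat \<Rightarrow> nat \<times> bool list \<Rightarrow> nat \<times> bool list \<Rightarrow> bool" where
  "BF_E d u v \<longleftrightarrow> BF_up d u v \<or> BF_up d v u"

definition level :: "nat \<Rightarrow> nat \<Rightarrow> (nat \<times> bool list) set" where
  "level d j = {(j, c) | c. length c = d}"

end

theory Submission
  imports Defs
begin

text \<open>Each edge of BF(d) joins consecutive levels, and bit k can only change on an edge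
  between levels k and k+1. So a walk between two words on level 0 whose last differing
  bit is k must climb to level k+1 and back, and the walk that climbs there while setting
  bits 0..k to 1 and then descends while restoring the second word is a geodesic. Its only
  inner vertex that could lie on L_0 or L_d is the top one, which for k+1 = d is
  [d,1...1]; this is why the all-ones vertices are removed. A vertex of L_0 and one of
  L_d are joined by a geodesic through the inner levels only. Finally
  [l,c] \<mapsto> [d-l, reverse of c] is an automorphism of BF(d) preserving X,
  which reduces the remaining pairs to these two cases.\<close>

lemma shortest_path_iff:
  "shortest_path V E x p y \<longleftrightarrow>
     walk_betw V E x p y \<and> (\<forall>q. walk_betw V E x q y \<longrightarrow> length p \<le> length q)"
proof
  assume sp: "shortest_path V E x p y"
  have "length p \<le> length q" if q: "walk_betw V E x q y" for q
  proof -
    have "length p - 1 \<le> length q - 1"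
      using sp q unfolding shortest_path_def gdist_def by (auto intro!: Least_le)
    moreover have "0 < length p" "0 < length q"
      using sp q by (simp_all add: shortest_path_def walk_betw_def walk_def)
    ultimately show ?thesis by linarith
  qed
  then show "walk_betw V E x p y \<and> (\<forall>q. walk_betw V E x q y \<longrightarrow> length p \<le> length q)"
    using sp by (simp add: shortest_path_def)
next
  assume "walk_betw V E x p y \<and> (\<forall>q. walk_betw V E x q y \<longrightarrow> length p \<le> length q)"
  then have walk: "walk_betw V E x p y" and min: "\<And>q. walk_betw V E x q y \<Longrightarrow> length p \<le> length q"
    by auto
  have "gdist V E x y = length p - 1"
    unfolding gdist_def
  proof (rule Least_equality)
    show "\<exists>q. walk_betw V E x q y \<and> length q - 1 = length p - 1" using walk by blast
  next
    fix n assume "\<exists>q. walk_betw V E x q y \<and> length q - 1 = n"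
    then show "length p - 1 \<le> n" using min diff_le_mono by blast
  qed
  then show "shortest_path V E x p y" using walk unfolding shortest_path_def by simp
qed

lemma X_visible_if_geodesic:
  fixes g :: "nat \<Rightarrow> 'a"
  assumes in_V: "\<And>i. i \<le> n \<Longrightarrow> g i \<in> V"
    and edges: "\<And>i. i < n \<Longrightarrow> E (g i) (g (Suc i))"
    and ends: "g 0 = x" "g n = y"
    and minimal: "\<And>q. walk_betw V E x q y \<Longrightarrow> n < length q"
    and avoids: "\<And>i. 0 < i \<Longrightarrow> i < n \<Longrightarrow> g i \<notin> X"
  shows "X_visible V E X x y"
proof -
  define p where "p = map g [0..<Suc n]"
  have len: "length p = Suc n" by (simp add: p_def)
  have nth_p: "p ! i = g i" if "i \<le> n" for i
    using that by (simp add: p_def nth_map_upt del: upt_Suc)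
  have ne: "p \<noteq> []" using len by auto
  have "walk_betw V E x p y"
    unfolding walk_betw_def walk_def
  proof (intro conjI allI impI ne)
    show "set p \<subseteq> V" using in_V by (auto simp: p_def simp del: upt_Suc)
    show "E (p ! i) (p ! Suc i)" if "Suc i < length p" for i
      using that len nth_p edges by simp
    show "hd p = x" using nth_p[of 0] ends by (simp add: hd_conv_nth[OF ne])
    show "last p = y" using len nth_p[of n] ends by (simp add: last_conv_nth[OF ne])
  qed
  then have "shortest_path V E x p y"
    using minimal len by (auto simp: shortest_path_iff Suc_le_eq)
  moreover have "internal p = g ` {1..<n}"
    by (simp add: internal_def p_def map_tl[symmetric] map_butlast[symmetric] butlast_tl)
  then have "internal p \<inter> X = {}"
    using avoids by auto
  ultimately show ?thesis
    unfolding X_visible_def by blast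
qed

lemma X_visible_refl: "x \<in> V \<Longrightarrow> X_visible V E X x x"
  by (rule X_visible_if_geodesic[where g = "\<lambda>_. x" and n = 0])
    (auto simp: walk_betw_def walk_def)

lemma walk_map:
  assumes "walk V E p" "\<And>v. v \<in> V \<Longrightarrow> f v \<in> V"
    and "\<And>u v. u \<in> V \<Longrightarrow> v \<in> V \<Longrightarrow> E u v \<Longrightarrow> E (f u) (f v)"
  shows "walk V E (map f p)"
  using assms by (auto simp: walk_def subset_iff)

lemma X_visible_involution:
  assumes f_V: "\<And>v. v \<in> V \<Longrightarrow> f v \<in> V"
    and f_f: "\<And>v. v \<in> V \<Longrightarrow> f (f v) = v"
    and f_E: "\<And>u v. u \<in> V \<Longrightarrow> v \<in> V \<Longrightarrow> E u v \<Longrightarrow> E (f u) (f v)"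
    and f_X: "\<And>v. v \<in> V \<Longrightarrow> f v \<in> X \<Longrightarrow> v \<in> X"
    and vis: "X_visible V E X x y"
  shows "X_visible V E X (f x) (f y)"
proof -
  obtain p where sp: "shortest_path V E x p y" and avoids: "internal p \<inter> X = {}"
    using vis by (auto simp: X_visible_def)
  then have p: "walk_betw V E x p y" "\<And>q. walk_betw V E x q y \<Longrightarrow> length p \<le> length q"
    by (auto simp: shortest_path_iff)
  then have xy: "x \<in> V" "y \<in> V"
    by (auto simp: walk_betw_def walk_def dest: hd_in_set last_in_set)
  have "walk_betw V E (f x) (map f p) (f y)"
    using p(1) walk_map[of V E _ f, OF _ f_V f_E] by (auto simp: walk_betw_def hd_map last_map walk_def)
  moreover have "length (map f p) \<le> length q" if "walk_betw V E (f x) q (f y)" for q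
  proof -
    have "walk_betw V E x (map f q) y"
      using that walk_map[of V E _ f, OF _ f_V f_E] xy f_f by (auto simp: walk_betw_def hd_map last_map walk_def)
    then show ?thesis using p(2) by fastforce
  qed
  moreover have "internal (map f p) \<inter> X = {}"
  proof -
    have "internal p \<subseteq> V"
      using p(1) by (auto simp: internal_def walk_betw_def walk_def dest: in_set_butlastD list.set_sel(2))
    then show ?thesis
      using avoids f_X by (auto simp: internal_def map_tl[symmetric] map_butlast[symmetric])
  qed
  ultimately show ?thesis by (auto simp: X_visible_def shortest_path_iff)
qed

lemma BF_E_sym: "BF_E d u v \<longleftrightarrow> BF_E d v u"
  by (auto simp: BF_E_def)

lemma BF_E_level: "BF_E d u v \<Longrightarrow> fst v = Suc (fst u) \<or> fst u = Suc (fst v)"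
  by (auto simp: BF_E_def BF_up_def)

lemma flip_nth_other: "l \<noteq> k \<Longrightarrow> flip c l ! k = c ! k"
  by (simp add: flip_def)

lemma BF_up_bit_change: "BF_up d u v \<Longrightarrow> snd v ! k \<noteq> snd u ! k \<Longrightarrow> fst u = k \<and> fst v = Suc k"
  by (cases "fst u = k") (auto simp: BF_up_def flip_nth_other)

lemma BF_E_bit_change:
  assumes "BF_E d u v" "snd v ! k \<noteq> snd u ! k"
  shows "(fst u = k \<and> fst v = Suc k) \<or> (fst u = Suc k \<and> fst v = k)"
  using assms BF_up_bit_change[of d u v k] BF_up_bit_change[of d v u k] by (auto simp: BF_E_def)

lemma BF_walk_level_bound:
  assumes walk: "walk (BF_V d) (BF_E d) q" and "i \<le> j" "j < length q"
  shows "fst (q ! j) \<le> fst (q ! i) + (j - i) \<and> fst (q ! i) \<le> fst (q ! j) + (j - i)"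
  using \<open>i \<le> j\<close> \<open>j < length q\<close>
proof (induction j rule: dec_induct)
  case (step j)
  then have "BF_E d (q ! j) (q ! Suc j)" using walk by (simp add: walk_def)
  then show ?case using step BF_E_level by fastforce
qed simp

lemma BF_walk_reaches_level:
  assumes walk: "walk (BF_V d) (BF_E d) q" and bit: "snd (last q) ! k \<noteq> snd (hd q) ! k"
  shows "\<exists>i < length q. fst (q ! i) = Suc k"
proof (rule ccontr)
  assume avoid: "\<not> ?thesis"
  have same_bit: "snd (q ! i) ! k = snd (q ! 0) ! k" if "i < length q" for i
    using that
  proof (induction i)
    case (Suc i)
    have edge: "BF_E d (q ! i) (q ! Suc i)" using walk Suc.prems by (simp add: walk_def)
    have "fst (q ! i) \<noteq> Suc k" "fst (q ! Suc i) \<noteq> Suc k" using avoid Suc.prems by auto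
    then have "snd (q ! Suc i) ! k = snd (q ! i) ! k" using BF_E_bit_change[OF edge] by blast
    then show ?case using Suc by simp
  qed simp
  have "q \<noteq> []" using walk by (simp add: walk_def)
  then show False using bit same_bit[of "length q - 1"] by (simp add: hd_conv_nth last_conv_nth)
qed

lemma BF_walk_length_through_level:
  assumes walk: "walk_betw (BF_V d) (BF_E d) x q y" and "i < length q"
  shows "(fst (q ! i) - fst x) + (fst (q ! i) - fst y) < length q"
proof -
  have w: "walk (BF_V d) (BF_E d) q" and ne: "q \<noteq> []"
    using walk by (auto simp: walk_betw_def walk_def)
  have ends: "x = q ! 0" "y = q ! (length q - 1)"
    using walk ne by (auto simp: walk_betw_def hd_conv_nth last_conv_nth)
  have "fst (q ! i) \<le> fst x + i"
    using BF_walk_level_bound[OF w, of 0 i] ends \<open>i < length q\<close> by simp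
  moreover have "fst (q ! i) \<le> fst y + (length q - 1 - i)"
    using BF_walk_level_bound[OF w, of i "length q - 1"] ends \<open>i < length q\<close> by simp
  ultimately show ?thesis using \<open>i < length q\<close> by linarith
qed

lemma BF_walk_length_ge_level_gap:
  assumes "walk_betw (BF_V d) (BF_E d) x q y"
  shows "fst y - fst x < length q"
proof -
  have w: "walk (BF_V d) (BF_E d) q" and ne: "q \<noteq> []"
    using assms by (auto simp: walk_betw_def walk_def)
  have ends: "x = q ! 0" "y = q ! (length q - 1)"
    using assms ne by (auto simp: walk_betw_def hd_conv_nth last_conv_nth)
  have "fst y \<le> fst x + (length q - 1)"
    using BF_walk_level_bound[OF w, of 0 "length q - 1"] ends ne by simp
  moreover have "0 < length q" using ne by simp
  ultimately show ?thesis by arith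
qed

definition merge_bits :: "nat \<Rightarrow> (nat \<Rightarrow> bool) \<Rightarrow> (nat \<Rightarrow> bool) \<Rightarrow> nat \<Rightarrow> bool list" where
  "merge_bits d P Q l = map (\<lambda>j. if j < l then P j else Q j) [0..<d]"

lemma length_merge_bits [simp]: "length (merge_bits d P Q l) = d"
  by (simp add: merge_bits_def)

lemma merge_bits_0: "length a = d \<Longrightarrow> merge_bits d P (nth a) 0 = a"
  by (rule nth_equalityI) (auto simp: merge_bits_def)

lemma merge_bits_full: "length a = d \<Longrightarrow> merge_bits d (nth a) Q d = a"
  by (rule nth_equalityI) (auto simp: merge_bits_def)

lemma merge_bits_full_const: "merge_bits d (\<lambda>_. c) Q d = replicate d c"
  by (rule nth_equalityI) (auto simp: merge_bits_def)

lemma merge_bits_Suc: "l < d \<Longrightarrow> merge_bits d P Q (Suc l) = (merge_bits d P Q l)[l := P l]"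
  by (rule nth_equalityI) (auto simp: merge_bits_def nth_list_update)

lemma list_update_eq_self_or_flip: "l < length c \<Longrightarrow> c[l := b] = c \<or> c[l := b] = flip c l"
  by (cases "b = c ! l") (auto simp: flip_def)

lemma BF_E_merge_bits:
  "l < d \<Longrightarrow> BF_E d (l, merge_bits d P Q l) (Suc l, merge_bits d P Q (Suc l))"
  using list_update_eq_self_or_flip[of l "merge_bits d P Q l" "P l"]
  by (auto simp: BF_E_def BF_up_def BF_V_def merge_bits_Suc)

definition BF_ends :: "nat \<Rightarrow> (nat \<times> bool list) set" where
  "BF_ends d = (level d 0 \<union> level d d) - {(0, replicate d True), (d, replicate d True)}"

lemma BF_ends_visible_across:
  assumes "length a = d" "length b = d"
  shows "X_visible (BF_V d) (BF_E d) (BF_ends d) (0, a) (d, b)"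
proof (rule X_visible_if_geodesic[where g = "\<lambda>l. (l, merge_bits d (nth b) (nth a) l)" and n = d])
  show "(0, merge_bits d (nth b) (nth a) 0) = (0, a)" "(d, merge_bits d (nth b) (nth a) d) = (d, b)"
    using assms by (simp_all add: merge_bits_0 merge_bits_full)
  show "(l, merge_bits d (nth b) (nth a) l) \<in> BF_V d" if "l \<le> d" for l
    using that by (simp add: BF_V_def)
  show "BF_E d (l, merge_bits d (nth b) (nth a) l) (Suc l, merge_bits d (nth b) (nth a) (Suc l))"
    if "l < d" for l
    using that by (rule BF_E_merge_bits)
  show "d < length q" if "walk_betw (BF_V d) (BF_E d) (0, a) q (d, b)" for q
    using BF_walk_length_ge_level_gap[OF that] by simp
  show "(l, merge_bits d (nth b) (nth a) l) \<notin> BF_ends d" if "0 < l" "l < d" for l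
    using that by (simp add: BF_ends_def level_def)
qed

lemma last_differing_index:
  assumes "length a = length b" "a \<noteq> b"
  obtains k where "k < length a" "a ! k \<noteq> b ! k" "\<And>j. k < j \<Longrightarrow> j < length a \<Longrightarrow> a ! j = b ! j"
proof -
  let ?K = "{j. j < length a \<and> a ! j \<noteq> b ! j}"
  have "?K \<noteq> {}" using assms nth_equalityI by blast
  moreover have "finite ?K" by simp
  ultimately have max: "Max ?K \<in> ?K" using Max_in by blast
  show thesis
  proof (rule that[of "Max ?K"])
    show "Max ?K < length a" "a ! Max ?K \<noteq> b ! Max ?K" using max by simp_all
  next
    fix j assume "Max ?K < j" "j < length a"
    then show "a ! j = b ! j" using Max_ge[of ?K j] by fastforce
  qed
qed

lemma BF_ends_visible_bottom:
  assumes "length a = d" "length b = d"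
  shows "X_visible (BF_V d) (BF_E d) (BF_ends d) (0, a) (0, b)"
proof (cases "a = b")
  case True
  then show ?thesis using assms by (simp add: X_visible_refl BF_V_def)
next
  case False
  then obtain k where k: "k < d" "a ! k \<noteq> b ! k" and agree: "\<And>j. k < j \<Longrightarrow> j < d \<Longrightarrow> a ! j = b ! j"
    using last_differing_index[of a b] assms by auto
  define m where "m = Suc k"
  define A where "A = merge_bits d (\<lambda>_. True) (nth a)"
  define B where "B = merge_bits d (\<lambda>_. True) (nth b)"
  define g where "g i = (if i \<le> m then (i, A i) else (2 * m - i, B (2 * m - i)))" for i
  have "A m = B m" using agree by (auto simp: A_def B_def m_def merge_bits_def)
  have "m \<le> d" using k by (simp add: m_def)
  show ?thesis
  proof (rule X_visible_if_geodesic[where g = g and n = "2 * m"])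
    show "g 0 = (0, a)" "g (2 * m) = (0, b)"
      using assms by (simp_all add: g_def A_def B_def merge_bits_0 m_def)
    show "g i \<in> BF_V d" if "i \<le> 2 * m" for i
      using \<open>m \<le> d\<close> by (auto simp: g_def BF_V_def A_def B_def)
    show "BF_E d (g i) (g (Suc i))" if "i < 2 * m" for i
    proof (cases "i < m")
      case True
      then show ?thesis using \<open>m \<le> d\<close> BF_E_merge_bits[of i d "\<lambda>_. True" "nth a"]
        by (simp add: g_def A_def)
    next
      case False
      define l where "l = 2 * m - Suc i"
      have Suc_l: "2 * m - i = Suc l" and "l < d"
        using False that \<open>m \<le> d\<close> by (auto simp: l_def)
      have "g i = (Suc l, B (Suc l))" "g (Suc i) = (l, B l)"
        using False Suc_l \<open>A m = B m\<close> by (auto simp: g_def l_def)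
      then show ?thesis using BF_E_merge_bits[OF \<open>l < d\<close>, of "\<lambda>_. True" "nth b"]
        by (simp add: B_def BF_E_sym)
    qed
    show "2 * m < length q" if "walk_betw (BF_V d) (BF_E d) (0, a) q (0, b)" for q
    proof -
      have w: "walk (BF_V d) (BF_E d) q" and bit: "snd (last q) ! k \<noteq> snd (hd q) ! k"
        using that k by (auto simp: walk_betw_def)
      obtain i where "i < length q" "fst (q ! i) = m"
        using BF_walk_reaches_level[OF w bit] by (auto simp: m_def)
      then show ?thesis using BF_walk_length_through_level[OF that] by fastforce
    qed
    show "g i \<notin> BF_ends d" if "0 < i" "i < 2 * m" for i
    proof
      assume ends: "g i \<in> BF_ends d"
      have "0 < fst (g i)" using that by (auto simp: g_def)
      then have "fst (g i) = d" using ends by (auto simp: BF_ends_def level_def)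
      then have "i = m" "m = d" using that \<open>m \<le> d\<close> by (auto simp: g_def split: if_splits)
      then have "g i = (d, replicate d True)"
        by (simp add: g_def A_def merge_bits_full_const)
      then show False using ends by (simp add: BF_ends_def)
    qed
  qed
qed

definition BF_mirror :: "nat \<Rightarrow> nat \<times> bool list \<Rightarrow> nat \<times> bool list" where
  "BF_mirror d v = (d - fst v, rev (snd v))"

lemma flip_flip: "flip (flip c l) l = c"
  by (cases "l < length c") (simp_all add: flip_def list_update_beyond)

lemma rev_flip: "l < length c \<Longrightarrow> rev (flip c l) = flip (rev c) (length c - Suc l)"
  by (simp add: flip_def rev_update rev_nth)

lemma BF_up_mirror: "BF_up d u v \<Longrightarrow> BF_up d (BF_mirror d v) (BF_mirror d u)"
  by (auto simp: BF_up_def BF_V_def BF_mirror_def rev_flip flip_flip)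

lemma BF_E_mirror: "BF_E d u v \<Longrightarrow> BF_E d (BF_mirror d u) (BF_mirror d v)"
  by (auto simp: BF_E_def dest: BF_up_mirror)

lemma BF_mirror_in_V: "v \<in> BF_V d \<Longrightarrow> BF_mirror d v \<in> BF_V d"
  by (auto simp: BF_V_def BF_mirror_def)

lemma BF_mirror_mirror: "v \<in> BF_V d \<Longrightarrow> BF_mirror d (BF_mirror d v) = v"
  by (auto simp: BF_V_def BF_mirror_def)

lemma BF_mirror_in_ends:
  assumes "v \<in> BF_V d"
  shows "BF_mirror d v \<in> BF_ends d \<longleftrightarrow> v \<in> BF_ends d"
proof -
  obtain l c where v: "v = (l, c)" and "l \<le> d" "length c = d"
    using assms by (auto simp: BF_V_def)
  have "rev c = replicate d True \<longleftrightarrow> c = replicate d True"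
    by (metis rev_replicate rev_rev_ident)
  moreover have "d - l = 0 \<longleftrightarrow> l = d" "d - l = d \<longleftrightarrow> l = 0"
    using \<open>l \<le> d\<close> by auto
  ultimately show ?thesis
    using \<open>length c = d\<close> by (simp add: v BF_mirror_def BF_ends_def level_def) blast
qed

lemma BF_ends_visible_mirror:
  "X_visible (BF_V d) (BF_E d) (BF_ends d) x y \<Longrightarrow>
     X_visible (BF_V d) (BF_E d) (BF_ends d) (BF_mirror d x) (BF_mirror d y)"
  by (rule X_visible_involution) (simp_all add: BF_mirror_in_V BF_mirror_mirror BF_E_mirror BF_mirror_in_ends)

lemma BF_ends_visible_from_bottom:
  assumes "length a = d" "y \<in> BF_ends d"
  shows "X_visible (BF_V d) (BF_E d) (BF_ends d) (0, a) y"
proof -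
  obtain l b where "y = (l, b)" "l = 0 \<or> l = d" "length b = d"
    using assms(2) by (auto simp: BF_ends_def level_def)
  then show ?thesis using BF_ends_visible_bottom BF_ends_visible_across assms(1) by auto
qed

lemma BF_ends_visible:
  assumes x: "x \<in> BF_ends d" and y: "y \<in> BF_ends d"
  shows "X_visible (BF_V d) (BF_E d) (BF_ends d) x y"
proof -
  obtain l a where x_eq: "x = (l, a)" and l: "l = 0 \<or> l = d" and a: "length a = d"
    using x by (auto simp: BF_ends_def level_def)
  show ?thesis
  proof (cases "l = 0")
    case True
    then show ?thesis using BF_ends_visible_from_bottom[OF a y] x_eq by simp
  next
    case False
    have y_V: "y \<in> BF_V d" using y by (auto simp: BF_ends_def level_def BF_V_def)
    have "X_visible (BF_V d) (BF_E d) (BF_ends d) (0, rev a) (BF_mirror d y)"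
      using BF_ends_visible_from_bottom a y y_V BF_mirror_in_ends by simp
    then have "X_visible (BF_V d) (BF_E d) (BF_ends d) (BF_mirror d (0, rev a)) y"
      using BF_ends_visible_mirror BF_mirror_mirror[OF y_V] by metis
    then show ?thesis using False l x_eq by (simp add: BF_mirror_def)
  qed
qed

lemma mutual_visibility_set_BF_ends: "mutual_visibility_set (BF_V d) (BF_E d) (BF_ends d)"
proof -
  have "BF_ends d \<subseteq> BF_V d" by (auto simp: BF_ends_def level_def BF_V_def)
  then show ?thesis using BF_ends_visible by (simp add: mutual_visibility_set_def)
qed

lemma card_level: "card (level d j) = 2 ^ d"
proof -
  have "level d j = Pair j ` {c. length c = d}"
    by (auto simp: level_def)
  moreover have "card {c :: bool list. length c = d} = 2 ^ d"
    using card_lists_length_eq[of "UNIV :: bool set" d] by simp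
  ultimately show ?thesis
    by (simp add: card_image inj_on_def)
qed

lemma card_BF_ends:
  assumes "1 \<le> d"
  shows "card (BF_ends d) = 2 ^ (d + 1) - 2"
proof -
  have fin: "finite (level d j)" for j
    using card_level[of d j] by (intro card_ge_0_finite) simp
  have "level d 0 \<inter> level d d = {}" using assms by (auto simp: level_def)
  then have "card (level d 0 \<union> level d d) = 2 ^ (d + 1)"
    using fin by (simp add: card_Un_disjoint card_level)
  moreover have "{(0, replicate d True), (d, replicate d True)} \<subseteq> level d 0 \<union> level d d"
    by (auto simp: level_def)
  moreover have "card {(0, replicate d True), (d, replicate d True)} = 2"
    using assms by simp
  ultimately show ?thesis
    unfolding BF_ends_def using fin by (simp add: card_Diff_subset)
qed

lemma finite_BF_V: "finite (BF_V d)"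
proof -
  have "BF_V d \<subseteq> {..d} \<times> {c. length c = d}"
    by (auto simp: BF_V_def)
  moreover have "finite {c :: bool list. length c = d}"
    using finite_lists_length_eq[of "UNIV :: bool set" d] by simp
  ultimately show ?thesis
    using finite_subset by blast
qed

lemma card_le_mu:
  assumes "finite V" "mutual_visibility_set V E X"
  shows "card X \<le> mu V E"
proof -
  have "{card Y | Y. mutual_visibility_set V E Y} \<subseteq> card ` Pow V"
    by (auto simp: mutual_visibility_set_def)
  then have "finite {card Y | Y. mutual_visibility_set V E Y}"
    using assms(1) finite_subset by blast
  then show ?thesis
    unfolding mu_def using assms(2) by (auto intro: Max_ge)
qed

theorem lemma5p2:
  fixes d :: nat
  assumes "d \<ge> 1"
  defines "X \<equiv> (level d 0 \<union> level d d) - {(0, replicate d True), (d, replicate d True)}"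
  shows "mutual_visibility_set (BF_V d) (BF_E d) X \<and> 2 ^ (d + 1) - 2 \<le> mu (BF_V d) (BF_E d)"
proof -
  have X: "X = BF_ends d" by (simp add: X_def BF_ends_def)
  have "card (BF_ends d) \<le> mu (BF_V d) (BF_E d)"
    using card_le_mu[OF finite_BF_V mutual_visibility_set_BF_ends] .
  then show ?thesis
    using X mutual_visibility_set_BF_ends card_BF_ends[OF assms(1)] by simp
qed

end
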